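(* For integers $q\ge1$, $p\ge0$ and all $(\beta,a)\in\mathcal G_H$, $$I_{p,q}(\beta,a)=2\,\xi^q\sum_{\ell=0}^{\lfloor p/2\rfloor}\binom{p}{2\ell}B\!\left(\ell+\tfrac12,q\right)(2\xi)^{2\ell}w^{p-2\ell},$$ where $w=w(\beta,a)$, $\xi=\xi(\beta,a)$ are as below and $B$ is the Beta function.
   Context: Poincaré disk $\mathbb D$ with metric $c^{-2}|dz|^2$, $c=\frac{1-|z|^2}{2}$. $\mathcal G_H=\mathbb R/2\pi\mathbb Z\times\mathbb R$ parametrizes unit-speed geodesics $z_{\beta,a}(t)=e^{i\beta}\frac{(2+ia)\tanh(t/2)+ia}{ia\tanh(t/2)-2+ia}$, $t\in\mathbb R$. $I_{p,q}(\beta,a)=\int_{\mathbb R}z_{\beta,a}(t)^p\,\dot z_{\beta,a}(t)^q\,dt$. With $\omega=\beta+\tan^{-1}a+\pi/2$, set $w(\beta,a)=-\frac{a\,e^{i\omega}}{\sqrt{1+a^2}}$ and $\xi(\beta,a)=\frac{i\,e^{i\omega}}{2\sqrt{1+a^2}}$; equivalently, if $z_\pm=\lim_{t\to\pm\infty}z_{\beta,a}(t)\in\mathbb S^1$, then $w=\frac{z_++z_-}{2}$, $\xi=\frac{z_+-z_-}{4}$. *)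

theory Defs
  imports "HOL-Analysis.Analysis"
begin

text \<open>Unit-speed geodesic of the Poincare disk parametrized by (beta, a).\<close>
definition geod :: "real \<Rightarrow> real \<Rightarrow> real \<Rightarrow> complex" where
  "geod \<beta> a t = cis \<beta> *
     (((2 + \<i> * of_real a) * of_real (tanh (t/2)) + \<i> * of_real a) /
      (\<i> * of_real a * of_real (tanh (t/2)) - 2 + \<i> * of_real a))"

definition geod_dot :: "real \<Rightarrow> real \<Rightarrow> real \<Rightarrow> complex" where
  "geod_dot \<beta> a t = vector_derivative (geod \<beta> a) (at t)"

definition omega_ga :: "real \<Rightarrow> real \<Rightarrow> real" where
  "omega_ga \<beta> a = \<beta> + arctan a + pi/2"

definition w_ga :: "real \<Rightarrow> real \<Rightarrow> complex" where
  "w_ga \<beta> a = - (of_real a * cis (omega_ga \<beta> a)) / of_real (sqrt (1 + a^2))"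

definition xi_ga :: "real \<Rightarrow> real \<Rightarrow> complex" where
  "xi_ga \<beta> a = (\<i> * cis (omega_ga \<beta> a)) / of_real (2 * sqrt (1 + a^2))"

end

theory Submission
  imports Defs "HOL-Complex_Analysis.Complex_Analysis" "HOL-Real_Asymp.Real_Asymp"
begin

text \<open>
  The geodesic is an affine image \<open>z = w + 2 \<xi> u\<close> of the curve
  \<open>u(t) = (tanh (t/2) + c) / (1 + c tanh (t/2))\<close> with \<open>c = i a / (i a - 2)\<close>, \<open>|c| < 1\<close>.
  This curve runs from \<open>-1\<close> to \<open>1\<close> and solves \<open>u' = (1 - u^2) / 2\<close>, so \<open>z' = \<xi> (1 - u^2)\<close>
  and the integrand is \<open>u' P(u)\<close> for the polynomial
  \<open>P(v) = 2 \<xi>^q (w + 2 \<xi> v)^p (1 - v^2)^(q-1)\<close>. Since \<open>P\<close> has a primitive, the integral over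
  the real line equals the integral of \<open>P\<close> over \<open>[-1, 1]\<close>. Expanding binomially, the odd
  moments vanish and the even ones are \<open>\<integral> x^(2l) (1 - x^2)^(q-1) = B(l + 1/2, q)\<close>, which follows
  by induction on the exponent from \<open>B(x, y) = B(x + 1, y) + B(x, y + 1)\<close>.
\<close>

lemma fundamental_theorem_of_calculus_improper:
  fixes f F :: "real \<Rightarrow> 'a::banach"
  assumes deriv: "\<And>t. (F has_vector_derivative f t) (at t)"
    and bot: "(F \<longlongrightarrow> L) at_bot" and top: "(F \<longlongrightarrow> R) at_top"
  shows "(f has_integral (R - L)) UNIV"
proof -
  have ftc: "(f has_integral (F b - F a)) {a..b}" if "a \<le> b" for a b
    using that deriv by (intro fundamental_theorem_of_calculus) (auto intro: has_vector_derivative_at_within)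
  have "f integrable_on cbox a b" for a b
    using ftc[of a b] by (cases "a \<le> b") auto
  \<comment> \<open>No absolute integrability is needed: over \<open>UNIV\<close> the gauge integral is the limit of the
    integrals over large boxes.\<close>
  moreover have "\<exists>B>0. \<forall>a b. ball 0 B \<subseteq> cbox a b \<longrightarrow> norm (integral (cbox a b) f - (R - L)) < e"
    if "e > 0" for e
  proof -
    obtain B1 where B1: "\<And>x. x \<ge> B1 \<Longrightarrow> dist (F x) R < e/2"
      using top \<open>e > 0\<close> unfolding tendsto_iff eventually_at_top_linorder by (meson half_gt_zero)
    obtain B2 where B2: "\<And>x. x \<le> B2 \<Longrightarrow> dist (F x) L < e/2"
      using bot \<open>e > 0\<close> unfolding tendsto_iff eventually_at_bot_linorder by (meson half_gt_zero)
    define B where "B = max 1 (max \<bar>B1\<bar> \<bar>B2\<bar>)"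
    have "norm (integral (cbox a b) f - (R - L)) < e" if ab: "ball 0 B \<subseteq> cbox a b" for a b
    proof -
      have "cball 0 B \<subseteq> {a..b}"
        using closure_minimal[OF ab] closure_ball[of 0 B] by (simp add: B_def)
      moreover have "-B \<in> cball 0 B" "B \<in> cball 0 B" by (auto simp: B_def)
      ultimately have "-B \<in> {a..b}" "B \<in> {a..b}" by blast+
      hence "a \<le> -B" "B \<le> b" by auto
      hence "a \<le> B2" "B1 \<le> b" "a \<le> b" by (auto simp: B_def)
      hence "integral (cbox a b) f = F b - F a" using ftc by (simp add: integral_unique)
      moreover have "norm (F b - F a - (R - L)) \<le> dist (F b) R + dist (F a) L"
      proof -
        have "F b - F a - (R - L) = (F b - R) - (F a - L)" by (simp add: algebra_simps)
        thus ?thesis unfolding dist_norm by (metis norm_triangle_ineq4)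
      qed
      ultimately show ?thesis using B1[OF \<open>B1 \<le> b\<close>] B2[OF \<open>a \<le> B2\<close>] by simp
    qed
    thus ?thesis by (intro exI[of _ B]) (auto simp: B_def)
  qed
  ultimately show ?thesis by (subst has_integral_alt') simp
qed

lemma has_integral_entire_along_curve:
  fixes P :: "complex \<Rightarrow> complex" and u u' :: "real \<Rightarrow> complex"
  assumes P: "P holomorphic_on UNIV"
    and u: "\<And>t. (u has_vector_derivative u' t) (at t)"
    and bot: "(u \<longlongrightarrow> -1) at_bot" and top: "(u \<longlongrightarrow> 1) at_top"
    and I: "((\<lambda>x. P (of_real x)) has_integral I) {-1..1}"
  shows "((\<lambda>t. u' t * P (u t)) has_integral I) UNIV"
proof -
  obtain Q where Q: "\<And>z. (Q has_field_derivative P z) (at z)"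
    using holomorphic_convex_primitive'[OF _ _ P] by auto
  have "((\<lambda>x. P (of_real x)) has_integral (Q (of_real 1) - Q (of_real (-1)))) {-1..1}"
    by (rule fundamental_theorem_of_calculus) (auto intro!: has_vector_derivative_real_field Q)
  hence "Q 1 - Q (-1) = I" using I by (simp add: has_integral_unique)
  moreover have "((\<lambda>t. u' t * P (u t)) has_integral (Q 1 - Q (-1))) UNIV"
  proof (rule fundamental_theorem_of_calculus_improper)
    show "((Q \<circ> u) has_vector_derivative u' t * P (u t)) (at t)" for t
      by (rule field_vector_diff_chain_at[OF u Q])
    have "isCont Q z" for z using Q by (rule DERIV_isCont)
    thus "((Q \<circ> u) \<longlongrightarrow> Q (-1)) at_bot" "((Q \<circ> u) \<longlongrightarrow> Q 1) at_top"
      using isCont_tendsto_compose[OF _ bot] isCont_tendsto_compose[OF _ top] by (auto simp: o_def)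
  qed
  ultimately show ?thesis by simp
qed

lemma Beta_one_right:
  assumes "(x::real) > 0"
  shows "Beta x 1 = 1 / x"
proof -
  have "x \<notin> \<int>\<^sub>\<le>\<^sub>0" using assms nonpos_Ints_nonpos by fastforce
  hence "Gamma x \<noteq> 0" "Gamma (x + 1) = x * Gamma x"
    by (simp_all add: Gamma_eq_zero_iff Gamma_plus1)
  thus ?thesis using assms by (simp add: Beta_def)
qed

lemma has_integral_Beta_moment:
  "((\<lambda>x::real. x^k * (1 - x\<^sup>2)^n) has_integral
     (if even k then Beta ((real k + 1) / 2) (real n + 1) else 0)) {-1..1}"
proof (induction n arbitrary: k)
  case 0
  have "((\<lambda>x::real. x^k) has_integral (1^(k + 1) / (k + 1) - (-1)^(k + 1) / (k + 1))) {-1..1}"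
  proof (rule fundamental_theorem_of_calculus)
    fix x :: real
    have "((\<lambda>x. x^(k + 1) / (k + 1)) has_real_derivative real (k + 1) * x^k / (k + 1)) (at x)"
      by (intro DERIV_cdivide) (use DERIV_pow[of "k + 1" x] in simp)
    thus "((\<lambda>x. x^(k + 1) / (k + 1)) has_vector_derivative x^k) (at x within {-1..1})"
      by (simp add: has_real_derivative_iff_has_vector_derivative[symmetric] has_field_derivative_at_within
          del: of_nat_Suc)
  qed simp
  moreover have "1^(k + 1) / (k + 1) - (-1)^(k + 1) / (k + 1) =
      (if even k then Beta ((real k + 1) / 2) (real 0 + 1) else 0)"
    by (simp add: Beta_one_right)
  ultimately show ?case by (simp only: power_0 mult_1_right)
next
  case (Suc n)
  define x where "x = (real k + 1) / 2"
  define y where "y = real n + 1"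
  have integrand_split: "(\<lambda>x::real. x^k * (1 - x\<^sup>2)^Suc n) =
      (\<lambda>x. x^k * (1 - x\<^sup>2)^n - x^(k + 2) * (1 - x\<^sup>2)^n)"
    by (auto simp: algebra_simps power2_eq_square)
  have "((\<lambda>x::real. x^k * (1 - x\<^sup>2)^n - x^(k + 2) * (1 - x\<^sup>2)^n) has_integral
     ((if even k then Beta x y else 0) - (if even k then Beta (x + 1) y else 0))) {-1..1}"
    using has_integral_diff[OF Suc.IH[of k] Suc.IH[of "k + 2"]]
    by (simp add: x_def y_def add_divide_distrib cong: if_cong)
  moreover have "x \<notin> \<int>\<^sub>\<le>\<^sub>0" "y \<notin> \<int>\<^sub>\<le>\<^sub>0"
    using nonpos_Ints_nonpos by (fastforce simp: x_def y_def)+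
  hence "(if even k then Beta x y else 0) - (if even k then Beta (x + 1) y else 0) =
      (if even k then Beta ((real k + 1) / 2) (real (Suc n) + 1) else 0)"
    using Beta_plus1_plus1[of x y] by (simp add: x_def y_def add.commute)
  ultimately show ?case unfolding integrand_split by simp
qed

lemma sum_atMost_even_indices:
  fixes T :: "nat \<Rightarrow> 'a::comm_monoid_add"
  assumes "\<And>j. odd j \<Longrightarrow> T j = 0"
  shows "(\<Sum>j\<le>p. T j) = (\<Sum>l = 0..p div 2. T (2 * l))"
proof -
  have "(\<Sum>j\<le>p. T j) = (\<Sum>j \<in> (\<lambda>l. 2 * l) ` {0..p div 2}. T j)"
  proof (rule sum.mono_neutral_right)
    show "\<forall>i \<in> {..p} - (\<lambda>l. 2 * l) ` {0..p div 2}. T i = 0"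
    proof
      fix i assume "i \<in> {..p} - (\<lambda>l. 2 * l) ` {0..p div 2}"
      hence "odd i" by (auto elim!: evenE)
      thus "T i = 0" by (rule assms)
    qed
  qed auto
  also have "\<dots> = (\<Sum>l = 0..p div 2. T (2 * l))"
    by (subst sum.reindex) (auto simp: inj_on_def)
  finally show ?thesis .
qed

lemma has_integral_binomial_Beta:
  fixes w m :: complex
  shows "((\<lambda>x::real. (w + m * of_real x)^p * (1 - (of_real x)\<^sup>2)^n) has_integral
     (\<Sum>l = 0..p div 2. of_nat (p choose (2 * l)) * of_real (Beta (real l + 1/2) (real n + 1)) *
        m^(2 * l) * w^(p - 2 * l))) {-1..1}"
proof -
  have expand: "(w + m * of_real x)^p * (1 - (of_real x)\<^sup>2)^n =
      (\<Sum>j\<le>p. (of_nat (p choose j) * m^j * w^(p - j)) * of_real (x^j * (1 - x\<^sup>2)^n))" for x :: real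
    by (subst add.commute, subst binomial_ring, subst sum_distrib_right)
       (simp add: power_mult_distrib mult_ac)
  have "((\<lambda>x. \<Sum>j\<le>p. (of_nat (p choose j) * m^j * w^(p - j)) * of_real (x^j * (1 - x\<^sup>2)^n))
     has_integral (\<Sum>j\<le>p. (of_nat (p choose j) * m^j * w^(p - j)) *
        of_real (if even j then Beta ((real j + 1) / 2) (real n + 1) else 0))) {-1..1}"
    by (intro has_integral_sum finite_atMost has_integral_mult_right has_integral_of_real
        has_integral_Beta_moment)
  moreover have "(\<Sum>j\<le>p. (of_nat (p choose j) * m^j * w^(p - j)) *
        of_real (if even j then Beta ((real j + 1) / 2) (real n + 1) else 0)) =
     (\<Sum>l = 0..p div 2. of_nat (p choose (2 * l)) * of_real (Beta (real l + 1/2) (real n + 1)) *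
        m^(2 * l) * w^(p - 2 * l))"
    by (subst sum_atMost_even_indices) (auto simp: mult_ac add_divide_distrib)
  ultimately show ?thesis by (simp only: expand)
qed

definition tanh_moebius :: "complex \<Rightarrow> real \<Rightarrow> complex" where
  "tanh_moebius c t = (of_real (tanh (t / 2)) + c) / (1 + c * of_real (tanh (t / 2)))"

lemma moebius_denominator_nonzero:
  fixes c :: complex
  assumes "norm c < 1" and "\<bar>s\<bar> \<le> 1"
  shows "1 + c * of_real s \<noteq> 0"
proof
  assume "1 + c * of_real s = 0"
  hence "c * of_real s = -1" by (simp add: add_eq_0_iff)
  moreover have "norm (c * of_real s) < 1"
    using assms mult_left_le[of "\<bar>s\<bar>" "norm c"] by (simp add: norm_mult)
  ultimately show False by simp
qed

lemma has_vector_derivative_tanh_moebius: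
  assumes c: "norm c < 1"
  shows "(tanh_moebius c has_vector_derivative (1 - tanh_moebius c t ^ 2) / 2) (at t)"
proof -
  define s where "s = tanh (t / 2)"
  have nz: "1 + c * of_real s \<noteq> 0"
  proof (rule moebius_denominator_nonzero[OF c])
    show "\<bar>s\<bar> \<le> 1" using tanh_real_bounds[of "t / 2"] by (auto simp: s_def)
  qed
  have "((\<lambda>t. tanh (t / 2)) has_real_derivative (1 - s\<^sup>2) / 2) (at t)"
    by (auto intro!: derivative_eq_intros simp: s_def)
  hence "((\<lambda>t. complex_of_real (tanh (t / 2))) has_vector_derivative of_real ((1 - s\<^sup>2) / 2)) (at t)"
    by (rule has_vector_derivative_of_real)
  moreover have "((\<lambda>z. (z + c) / (1 + c * z)) has_field_derivative (1 - c\<^sup>2) / (1 + c * of_real s)\<^sup>2)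
      (at (of_real s))"
    using nz by (auto intro!: derivative_eq_intros simp: power2_eq_square field_simps)
  ultimately have "(tanh_moebius c has_vector_derivative
      of_real ((1 - s\<^sup>2) / 2) * ((1 - c\<^sup>2) / (1 + c * of_real s)\<^sup>2)) (at t)"
    using field_vector_diff_chain_at unfolding s_def by (fastforce simp: o_def tanh_moebius_def[abs_def])
  moreover have "of_real ((1 - s\<^sup>2) / 2) * ((1 - c\<^sup>2) / (1 + c * of_real s)\<^sup>2) =
      (1 - tanh_moebius c t ^ 2) / 2"
  proof -
    have "1 - tanh_moebius c t ^ 2 =
        ((1 + c * of_real s)\<^sup>2 - (of_real s + c)\<^sup>2) / (1 + c * of_real s)\<^sup>2"
      using nz by (simp add: tanh_moebius_def s_def power_divide diff_divide_distrib)
    also have "(1 + c * of_real s)\<^sup>2 - (of_real s + c)\<^sup>2 = (1 - (of_real s)\<^sup>2) * (1 - c\<^sup>2)"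
      by (simp add: algebra_simps power2_eq_square)
    finally show ?thesis by simp
  qed
  ultimately show ?thesis by (simp only:)
qed

lemma tanh_moebius_at_top:
  assumes "norm c < 1"
  shows "(tanh_moebius c \<longlongrightarrow> 1) at_top"
proof -
  have nz: "1 + c * of_real 1 \<noteq> 0" by (rule moebius_denominator_nonzero[OF assms]) simp
  have "((\<lambda>t::real. tanh (t / 2)) \<longlongrightarrow> 1) at_top" by real_asymp
  hence "(tanh_moebius c \<longlongrightarrow> (of_real 1 + c) / (1 + c * of_real 1)) at_top"
    unfolding tanh_moebius_def[abs_def] using nz by (intro tendsto_intros) auto
  thus ?thesis using nz by simp
qed

lemma tanh_moebius_at_bot:
  assumes "norm c < 1"
  shows "(tanh_moebius c \<longlongrightarrow> -1) at_bot"
proof -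
  have nz: "1 + c * of_real (-1) \<noteq> 0" by (rule moebius_denominator_nonzero[OF assms]) simp
  have "((\<lambda>t::real. tanh (t / 2)) \<longlongrightarrow> -1) at_bot" by real_asymp
  hence "(tanh_moebius c \<longlongrightarrow> (of_real (-1) + c) / (1 + c * of_real (-1))) at_bot"
    unfolding tanh_moebius_def[abs_def] using nz by (intro tendsto_intros) auto
  moreover have "(of_real (-1) + c) / (1 + c * of_real (-1)) = -1"
    using nz by (simp add: field_simps)
  ultimately show ?thesis by simp
qed

lemma cis_omega_ga_div_sqrt:
  "cis (omega_ga \<beta> a) / of_real (sqrt (1 + a\<^sup>2)) = \<i> * cis \<beta> / (1 - \<i> * of_real a)"
proof -
  define r :: complex where "r = of_real (sqrt (1 + a\<^sup>2))"
  have "cis (arctan a) = (1 + \<i> * of_real a) / r"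
    by (simp add: r_def complex_eq_iff cos_arctan sin_arctan)
  hence "cis (omega_ga \<beta> a) / r = \<i> * cis \<beta> * (1 + \<i> * of_real a) / r\<^sup>2"
    by (simp add: omega_ga_def cis_mult[symmetric] power2_eq_square mult_ac)
  also have "r\<^sup>2 = (1 + \<i> * of_real a) * (1 - \<i> * of_real a)"
  proof -
    have "r\<^sup>2 = of_real (1 + a\<^sup>2)"
      unfolding r_def of_real_power[symmetric] by (simp add: add_nonneg_nonneg)
    thus ?thesis by (simp add: algebra_simps power2_eq_square)
  qed
  also have "1 + \<i> * of_real a \<noteq> 0" by (simp add: complex_eq_iff)
  hence "\<i> * cis \<beta> * (1 + \<i> * of_real a) / ((1 + \<i> * of_real a) * (1 - \<i> * of_real a)) =
      \<i> * cis \<beta> / (1 - \<i> * of_real a)"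
    by simp
  finally show ?thesis by (simp add: r_def)
qed

lemma w_ga_eq: "w_ga \<beta> a = \<i> * of_real a * cis \<beta> / (\<i> * of_real a - 1)"
proof -
  have "w_ga \<beta> a = - of_real a * (cis (omega_ga \<beta> a) / of_real (sqrt (1 + a\<^sup>2)))"
    by (simp add: w_ga_def)
  also have "\<dots> = \<i> * of_real a * cis \<beta> / (\<i> * of_real a - 1)"
    unfolding cis_omega_ga_div_sqrt by (simp add: minus_divide_right)
  finally show ?thesis .
qed

lemma xi_ga_eq: "2 * xi_ga \<beta> a = cis \<beta> / (\<i> * of_real a - 1)"
proof -
  have "2 * xi_ga \<beta> a = \<i> * (cis (omega_ga \<beta> a) / of_real (sqrt (1 + a\<^sup>2)))"
    by (simp add: xi_ga_def)
  also have "\<dots> = cis \<beta> / (\<i> * of_real a - 1)"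
    unfolding cis_omega_ga_div_sqrt by (simp add: minus_divide_right)
  finally show ?thesis .
qed

lemma norm_geod_moebius_parameter: "norm (\<i> * of_real a / (\<i> * of_real a - 2)) < 1"
proof -
  have "norm (\<i> * of_real a) < norm (\<i> * of_real a - 2)"
    using real_sqrt_less_mono[of "a\<^sup>2" "4 + a\<^sup>2"] by (simp add: cmod_def)
  thus ?thesis by (simp add: norm_divide divide_less_eq)
qed

lemma geod_eq_tanh_moebius:
  "geod \<beta> a t = w_ga \<beta> a + 2 * xi_ga \<beta> a * tanh_moebius (\<i> * of_real a / (\<i> * of_real a - 2)) t"
proof -
  define A where "A = \<i> * complex_of_real a"
  define S where "S = complex_of_real (tanh (t / 2))"
  define D where "D = A * S - 2 + A"
  have nz: "A - 1 \<noteq> 0" "A - 2 \<noteq> 0" "D \<noteq> 0"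
    by (simp_all add: A_def S_def D_def complex_eq_iff)
  have "1 + A / (A - 2) * S = D / (A - 2)" "S + A / (A - 2) = ((A - 2) * S + A) / (A - 2)"
    using nz by (simp_all add: D_def field_simps)
  hence "tanh_moebius (A / (A - 2)) t = ((A - 2) * S + A) / D"
    using nz by (simp add: tanh_moebius_def S_def[symmetric])
  hence "w_ga \<beta> a + 2 * xi_ga \<beta> a * tanh_moebius (A / (A - 2)) t =
      A * cis \<beta> / (A - 1) + cis \<beta> / (A - 1) * (((A - 2) * S + A) / D)"
    by (simp add: w_ga_eq xi_ga_eq A_def)
  also have "\<dots> = cis \<beta> * (A * D + ((A - 2) * S + A)) / ((A - 1) * D)"
    using nz by (simp add: divide_simps) (simp add: algebra_simps)
  also have "A * D + ((A - 2) * S + A) = (A - 1) * ((2 + A) * S + A)"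
    by (simp add: D_def algebra_simps)
  also have "cis \<beta> * ((A - 1) * ((2 + A) * S + A)) / ((A - 1) * D) = geod \<beta> a t"
    using nz by (simp add: geod_def A_def S_def D_def)
  finally show ?thesis by (simp add: A_def)
qed

lemma geod_dot_eq_tanh_moebius:
  fixes \<beta> a t :: real
  defines "u \<equiv> tanh_moebius (\<i> * of_real a / (\<i> * of_real a - 2))"
  shows "geod_dot \<beta> a t = xi_ga \<beta> a * (1 - u t ^ 2)"
proof -
  have "(geod \<beta> a has_vector_derivative 2 * xi_ga \<beta> a * ((1 - u t ^ 2) / 2)) (at t)"
    unfolding geod_eq_tanh_moebius[abs_def] u_def
    by (rule has_vector_derivative_eq_rhs[OF has_vector_derivative_add[OF has_vector_derivative_const
          has_vector_derivative_mult_right[OF has_vector_derivative_tanh_moebius[OF norm_geod_moebius_parameter]]]])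
       simp
  thus ?thesis unfolding geod_dot_def by (simp add: vector_derivative_at)
qed

theorem proposition4p5:
  fixes p q :: nat and \<beta> a :: real
  assumes "q \<ge> 1"
  shows "((\<lambda>t. geod \<beta> a t ^ p * geod_dot \<beta> a t ^ q) has_integral
          2 * xi_ga \<beta> a ^ q *
          (\<Sum>l = 0..p div 2. of_nat (p choose (2*l)) *
              of_real (Beta (real l + 1/2) (real q)) *
              (2 * xi_ga \<beta> a) ^ (2*l) * w_ga \<beta> a ^ (p - 2*l))) UNIV"
proof -
  obtain n where q: "q = Suc n" using assms by (cases q) auto
  define c where "c = \<i> * of_real a / (\<i> * of_real a - 2)"
  define w where "w = w_ga \<beta> a"
  define \<xi> where "\<xi> = xi_ga \<beta> a"
  define P where "P = (\<lambda>v::complex. 2 * \<xi> ^ q * ((w + 2 * \<xi> * v) ^ p * (1 - v\<^sup>2) ^ n))"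
  have c: "norm c < 1" unfolding c_def by (rule norm_geod_moebius_parameter)
  have I: "((\<lambda>x. P (of_real x)) has_integral
      2 * \<xi> ^ q * (\<Sum>l = 0..p div 2. of_nat (p choose (2*l)) * of_real (Beta (real l + 1/2) (real q)) *
        (2 * \<xi>) ^ (2*l) * w ^ (p - 2*l))) {-1..1}"
    unfolding P_def using has_integral_binomial_Beta[of w "2 * \<xi>" p n]
    by (intro has_integral_mult_right) (simp add: q add.commute)
  have "P holomorphic_on UNIV" unfolding P_def by (intro holomorphic_intros)
  moreover have "(\<lambda>t. geod \<beta> a t ^ p * geod_dot \<beta> a t ^ q) =
      (\<lambda>t. (1 - tanh_moebius c t ^ 2) / 2 * P (tanh_moebius c t))"
    unfolding P_def geod_eq_tanh_moebius geod_dot_eq_tanh_moebius c_def w_def \<xi>_def q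
    by (simp add: power_mult_distrib mult_ac)
  ultimately show ?thesis
    using has_integral_entire_along_curve[OF _ has_vector_derivative_tanh_moebius[OF c]
        tanh_moebius_at_bot[OF c] tanh_moebius_at_top[OF c] I]
    unfolding w_def \<xi>_def by simp
qed

end
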